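(* Let $W\subseteq K_n$ be a $k$-wheel with vertex set $V$ and center $v_0$. (i) If $v_0=\min V$, label the spokes so that $W=W(v_0;v_1,\dots,v_k)$ with $v_1=\max\{v_1,\dots,v_k\}$ and $v_2>v_k$. Then $LT(W)=(\mathrm{Rd}(W)\setminus\{v_0v_1\})\cup\{v_kv_1\}$. (ii) If $v_0=\max V$, label the spokes so that $W=W(v_0;v_1,\dots,v_k)$ with $v_1v_2$ the $\succ$-smallest chord of $W$ and $v_1>v_2$. Then $LT(W)=(\mathrm{Ch}(W)\setminus\{v_1v_2\})\cup\{v_0v_2\}$.
   Context: For $k\ge 3$ and distinct vertices $v_0,\dots,v_k\in[1,n]$, the $k$-wheel $W(v_0;v_1,\dots,v_k)$ has center $v_0$, radii $\mathrm{Rd}(W)=\{v_0v_i:1\le i\le k\}$ and chords $\mathrm{Ch}(W)=\{v_iv_{i+1}:1\le i\le k\}$ with $v_{k+1}=v_1$. A coupled tree of $W$ is a spanning tree $T\subseteq E(W)$ of $V(W)$ whose complement $E(W)\setminus T$ is also a spanning tree. Order the edges of $K_n$ totally by $12\succ13\succ\dots\succ1n\succ23\succ\dots\succ n{-}1\,n$ (for $a<b$, $c<d$: $ab\succ cd$ iff $a<c$, or $a=c$ and $b<d$). Extend to edge sets: $E\succ F$ iff $|E|>|F|$, or $|E|=|F|$ and the $\succ$-largest element of $E\triangle F$ lies in $E$. The leading tree $LT(W)$ is the $\succ$-largest coupled tree of $W$. *)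

theory Defs
  imports Main
begin

text \<open>Vertices are natural numbers; an edge is a two-element set of vertices.\<close>

definition edge_conn :: "nat set set \<Rightarrow> (nat \<times> nat) set" where
  "edge_conn T = {(x, y). {x, y} \<in> T}"

definition connects :: "nat set \<Rightarrow> nat set set \<Rightarrow> bool" where
  "connects V T \<longleftrightarrow> (\<forall>x\<in>V. \<forall>y\<in>V. (x, y) \<in> (edge_conn T)\<^sup>*)"

definition spanning_tree :: "nat set \<Rightarrow> nat set set \<Rightarrow> bool" where
  "spanning_tree V T \<longleftrightarrow>
     (\<forall>e\<in>T. e \<subseteq> V \<and> card e = 2) \<and> connects V T \<and>
     (\<forall>e\<in>T. \<not> connects V (T - {e}))"

definition coupled_tree :: "nat set \<Rightarrow> nat set set \<Rightarrow> nat set set \<Rightarrow> bool" where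
  "coupled_tree V E T \<longleftrightarrow> T \<subseteq> E \<and> spanning_tree V T \<and> spanning_tree V (E - T)"

definition edge_gt :: "nat set \<Rightarrow> nat set \<Rightarrow> bool" where
  "edge_gt e f \<longleftrightarrow> Min e < Min f \<or> (Min e = Min f \<and> Max e < Max f)"

definition set_gt :: "nat set set \<Rightarrow> nat set set \<Rightarrow> bool" where
  "set_gt E F \<longleftrightarrow> card E > card F \<or>
     (card E = card F \<and>
      (\<exists>x\<in>E - F. \<forall>y\<in>(E - F) \<union> (F - E). y \<noteq> x \<longrightarrow> edge_gt x y))"

definition wheel_vertices :: "(nat \<Rightarrow> nat) \<Rightarrow> nat \<Rightarrow> nat set" where
  "wheel_vertices v k = v ` {0..k}"

definition radii :: "(nat \<Rightarrow> nat) \<Rightarrow> nat \<Rightarrow> nat set set" where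
  "radii v k = {{v 0, v i} | i. 1 \<le> i \<and> i \<le> k}"

definition chords :: "(nat \<Rightarrow> nat) \<Rightarrow> nat \<Rightarrow> nat set set" where
  "chords v k = {{v i, v (if i = k then 1 else i + 1)} | i. 1 \<le> i \<and> i \<le> k}"

definition wheel_edges :: "(nat \<Rightarrow> nat) \<Rightarrow> nat \<Rightarrow> nat set set" where
  "wheel_edges v k = radii v k \<union> chords v k"

definition leading_tree :: "(nat \<Rightarrow> nat) \<Rightarrow> nat \<Rightarrow> nat set set" where
  "leading_tree v k = (THE T. coupled_tree (wheel_vertices v k) (wheel_edges v k) T \<and>
     (\<forall>T'. coupled_tree (wheel_vertices v k) (wheel_edges v k) T' \<and> T' \<noteq> T \<longrightarrow> set_gt T T'))"

end

theory Submission
  imports Defs "HOL-Library.Product_Lexorder"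
begin

(* A coupled tree of a k-wheel and its complement both connect the k + 1 vertices, so each has at
   least k of the 2k edges, hence exactly k; conversely a connected set of k edges is a spanning
   tree. Hence the claimed leading tree T is a coupled tree as soon as T and its complement are
   connected. It beats every other coupled tree T' because each edge x of T' outside T is beaten by
   an edge of T missing from T': either x lies on a cycle of the wheel that T' cannot contain, or x
   meets a vertex cut that the complement of T' must cross, and in both cases the remaining edges of
   the cycle or cut lie in T and are larger than x. *)

section \<open>Connectivity of edge sets\<close>

lemma edge_conn_iff [simp]: "(a, b) \<in> edge_conn F \<longleftrightarrow> {a, b} \<in> F"
  by (simp add: edge_conn_def)

lemma sym_edge_conn: "sym (edge_conn F)"
  by (auto simp: sym_def insert_commute)

lemma edge_conn_rtrancl_sym: "(a, b) \<in> (edge_conn F)\<^sup>* \<Longrightarrow> (b, a) \<in> (edge_conn F)\<^sup>*"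
  using sym_rtrancl[OF sym_edge_conn] by (rule symD)

lemma edge_conn_rtrancl_edge: "{a, b} \<in> F \<Longrightarrow> (a, b) \<in> (edge_conn F)\<^sup>*"
  by (simp add: r_into_rtrancl)

lemma connectsI_root:
  assumes "\<And>x. x \<in> V \<Longrightarrow> (root, x) \<in> (edge_conn F)\<^sup>*"
  shows "connects V F"
  unfolding connects_def
  by (meson assms edge_conn_rtrancl_sym rtrancl_trans)

lemma rtrancl_edge_conn_path:
  assumes "\<And>j. a \<le> j \<Longrightarrow> j < b \<Longrightarrow> {p j, p (Suc j)} \<in> F" and "a \<le> b"
  shows "(p a, p b) \<in> (edge_conn F)\<^sup>*"
  using assms(2)
proof (induction b rule: dec_induct)
  case (step b)
  then show ?case using assms(1) by (simp add: rtrancl.rtrancl_into_rtrancl)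
qed simp

lemma connects_crossing_edge:
  assumes "connects V F" "x \<in> V" "y \<in> V" "x \<in> A" "y \<notin> A"
  obtains a b where "{a, b} \<in> F" "a \<in> A" "b \<notin> A"
proof -
  have "(x, y) \<in> (edge_conn F)\<^sup>*"
    using assms(1-3) unfolding connects_def by blast
  then show thesis
    using assms(5) by (induction rule: rtrancl_induct) (use assms(4) that in auto)
qed

lemma connects_remove_edge:
  assumes "connects V F" "(a, b) \<in> (edge_conn (F - {{a, b}}))\<^sup>*"
  shows "connects V (F - {{a, b}})"
proof -
  have "(x, y) \<in> (edge_conn (F - {{a, b}}))\<^sup>*" if "{x, y} \<in> F" for x y
  proof (cases "{x, y} = {a, b}")
    case True
    then show ?thesis
      using assms(2) edge_conn_rtrancl_sym by (auto simp: doubleton_eq_iff)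
  next
    case False
    then show ?thesis
      using that by (intro r_into_rtrancl) simp
  qed
  then have "edge_conn F \<subseteq> (edge_conn (F - {{a, b}}))\<^sup>*"
    by auto
  then show ?thesis
    using assms(1) rtrancl_subset_rtrancl unfolding connects_def by blast
qed

lemma spanning_tree_edge_is_bridge:
  assumes "spanning_tree V T" "{a, b} \<in> T"
  shows "(a, b) \<notin> (edge_conn (T - {{a, b}}))\<^sup>*"
  using assms connects_remove_edge unfolding spanning_tree_def by blast

lemma coupled_tree_edge_is_bridge:
  "coupled_tree V E T \<Longrightarrow> {a, b} \<in> T \<Longrightarrow> (a, b) \<notin> (edge_conn (T - {{a, b}}))\<^sup>*"
  unfolding coupled_tree_def by (rule spanning_tree_edge_is_bridge) auto

lemma card_le_Suc_card_if_connects: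
  assumes "connects V F" "finite F"
  shows "card V \<le> Suc (card F)"
proof (cases "V = {}")
  case False
  then obtain root where root: "root \<in> V" by blast
  let ?R = "edge_conn F"
  define dist where "dist u = (LEAST m. (u, root) \<in> ?R ^^ m)" for u
  have reach: "\<exists>m. (u, root) \<in> ?R ^^ m" if "u \<in> V" for u
    using assms(1) root that unfolding connects_def by (meson rtrancl_imp_relpow)
  have dist: "(u, root) \<in> ?R ^^ dist u" if "u \<in> V" for u
    unfolding dist_def using reach[OF that] by (rule LeastI_ex)
  have "\<exists>w. {u, w} \<in> F \<and> dist w < dist u" if "u \<in> V - {root}" for u
  proof -
    have "dist u \<noteq> 0"
      using dist[of u] that by (cases "dist u") auto
    then have "(u, root) \<in> ?R ^^ Suc (dist u - 1)"
      using dist[of u] that by simp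
    then obtain w where "(u, w) \<in> ?R" "(w, root) \<in> ?R ^^ (dist u - 1)"
      by (blast dest: relpow_Suc_D2)
    moreover have "dist w \<le> dist u - 1"
      unfolding dist_def[of w] by (rule Least_le) fact
    ultimately show ?thesis
      using \<open>dist u \<noteq> 0\<close> by auto
  qed
  \<comment> \<open>charge each vertex but the root to the edge towards its parent in a shortest-path tree\<close>
  then obtain parent
    where parent: "\<And>u. u \<in> V - {root} \<Longrightarrow> {u, parent u} \<in> F \<and> dist (parent u) < dist u"
    by (metis (no_types))
  have "inj_on (\<lambda>u. {u, parent u}) (V - {root})"
  proof (rule inj_onI)
    fix u u' assume u: "u \<in> V - {root}" "u' \<in> V - {root}" "{u, parent u} = {u', parent u'}"
    show "u = u'"
    proof (rule ccontr)
      assume "u \<noteq> u'"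
      then have "u = parent u'" "u' = parent u" using u(3) by (auto simp: doubleton_eq_iff)
      then show False using parent[OF u(1)] parent[OF u(2)] by simp
    qed
  qed
  moreover have "(\<lambda>u. {u, parent u}) ` (V - {root}) \<subseteq> F" using parent by blast
  ultimately have "card (V - {root}) \<le> card F"
    using assms(2) by (rule card_inj_on_le)
  then show ?thesis using root by (cases "finite V") auto
qed simp

lemma spanning_treeI_card:
  assumes "\<forall>e\<in>T. e \<subseteq> V \<and> card e = 2" "connects V T" "finite T" "Suc (card T) \<le> card V"
  shows "spanning_tree V T"
proof -
  have "\<not> connects V (T - {e})" if "e \<in> T" for e
  proof
    assume "connects V (T - {e})"
    then have "card V \<le> Suc (card (T - {e}))"
      using assms(3) by (simp add: card_le_Suc_card_if_connects)
    then show False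
      using assms(4) card_Diff1_less[OF assms(3) that] by linarith
  qed
  then show ?thesis
    using assms(1,2) unfolding spanning_tree_def by blast
qed

lemma coupled_treeI_card:
  assumes "finite E" "\<forall>e\<in>E. e \<subseteq> V \<and> card e = 2" "card E + 2 \<le> 2 * card V"
    and "T \<subseteq> E" "connects V T" "connects V (E - T)"
  shows "coupled_tree V E T"
proof -
  have finite: "finite T" "finite (E - T)"
    using assms(1,4) finite_subset by auto
  have "card V \<le> Suc (card T)" "card V \<le> Suc (card (E - T))"
    using assms(5,6) finite by (simp_all add: card_le_Suc_card_if_connects)
  moreover have "card (E - T) = card E - card T" "card T \<le> card E"
    using assms(1,4) finite by (simp_all add: card_Diff_subset card_mono)
  ultimately have "Suc (card T) \<le> card V" "Suc (card (E - T)) \<le> card V"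
    using assms(3) by linarith+
  then show ?thesis
    using assms finite unfolding coupled_tree_def by (blast intro: spanning_treeI_card)
qed

lemma coupled_tree_card:
  assumes "coupled_tree V E T" "finite E" "card E + 2 \<le> 2 * card V"
  shows "Suc (card T) = card V"
proof -
  have "T \<subseteq> E" "connects V T" "connects V (E - T)"
    using assms(1) unfolding coupled_tree_def spanning_tree_def by auto
  moreover have "finite T"
    using \<open>T \<subseteq> E\<close> assms(2) finite_subset by blast
  ultimately have "card V \<le> Suc (card T)" "card V \<le> Suc (card (E - T))"
    using assms(2) by (simp_all add: card_le_Suc_card_if_connects)
  moreover have "card (E - T) = card E - card T" "card T \<le> card E"
    using \<open>T \<subseteq> E\<close> \<open>finite T\<close> assms(2) by (simp_all add: card_Diff_subset card_mono)
  ultimately show ?thesis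
    using assms(3) by linarith
qed

section \<open>The orders on edges and edge sets\<close>

lemma edge_gt_iff_lex: "edge_gt e f \<longleftrightarrow> (Min e, Max e) < (Min f, Max f)"
  by (auto simp: edge_gt_def)

lemma edge_gt_smaller_endpoint: "a < c \<Longrightarrow> b < c \<Longrightarrow> edge_gt {a, b} {c, b}"
  by (auto simp: edge_gt_def min_def max_def)

lemma edge_gt_asym: "edge_gt e f \<Longrightarrow> \<not> edge_gt f e"
  by (auto simp: edge_gt_def)

lemma card_2_eq_Min_Max:
  assumes "card e = 2"
  shows "e = {Min e, Max e}"
proof -
  obtain x y :: 'a where "e = {x, y}"
    using assms by (auto simp: card_2_iff)
  then show ?thesis
    by (cases "x \<le> y") (auto simp: min_def max_def)
qed

lemma set_gt_asym: "set_gt A B \<Longrightarrow> \<not> set_gt B A"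
proof
  assume "set_gt A B" "set_gt B A"
  then obtain x y where "x \<in> A - B" "y \<in> B - A"
    "\<forall>z\<in>(A - B) \<union> (B - A). z \<noteq> x \<longrightarrow> edge_gt x z"
    "\<forall>z\<in>(B - A) \<union> (A - B). z \<noteq> y \<longrightarrow> edge_gt y z"
    unfolding set_gt_def by auto
  then have "edge_gt x y" "edge_gt y x"
    by auto
  then show False
    using edge_gt_asym by blast
qed

lemma set_gtI:
  assumes "finite T" "finite T'" "card T' \<le> card T" "T \<noteq> T'" "\<forall>e\<in>T \<union> T'. card e = 2"
    and "\<And>x. x \<in> T' - T \<Longrightarrow> \<exists>y\<in>T - T'. edge_gt y x"
  shows "set_gt T T'"
proof (cases "card T' < card T")
  case False
  define key where "key e = (Min e, Max e)" for e :: "nat set"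
  let ?S = "(T - T') \<union> (T' - T)"
  have S: "finite ?S" "?S \<noteq> {}"
    using assms(1,2,4) by blast+
  have "Min (key ` ?S) \<in> key ` ?S"
    using S by (intro Min_in) auto
  then obtain z where z: "z \<in> ?S" "key z = Min (key ` ?S)"
    by (metis (no_types, lifting) imageE)
  have z_greatest: "edge_gt z y" if "y \<in> ?S" "y \<noteq> z" for y
  proof -
    have "key z \<le> key y"
      using z(2) S that by simp
    moreover have "card z = 2" "card y = 2"
      using assms(5) z(1) that(1) by auto
    then have "key z \<noteq> key y"
      using card_2_eq_Min_Max that(2) unfolding key_def by (metis prod.inject)
    ultimately have "key z < key y"
      by (simp add: order_less_le)
    then show ?thesis
      unfolding edge_gt_iff_lex key_def .
  qed
  have "z \<in> T - T'"
  proof (rule ccontr)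
    assume "z \<notin> T - T'"
    then obtain y where "y \<in> T - T'" "edge_gt y z"
      using assms(6) z(1) by blast
    then show False
      using z_greatest edge_gt_asym by blast
  qed
  then show ?thesis
    using False assms(3) z_greatest unfolding set_gt_def by auto
qed (simp add: set_gt_def)

lemma leading_tree_eqI:
  assumes "coupled_tree (wheel_vertices v k) (wheel_edges v k) T"
    and "\<And>T'. coupled_tree (wheel_vertices v k) (wheel_edges v k) T' \<Longrightarrow> T' \<noteq> T \<Longrightarrow> set_gt T T'"
  shows "leading_tree v k = T"
  unfolding leading_tree_def
  by (rule the_equality) (use assms set_gt_asym in blast)+

section \<open>Coupled trees of a wheel\<close>

locale wheel =
  fixes k :: nat and v :: "nat \<Rightarrow> nat"
  assumes three_le_k: "3 \<le> k" and inj_v: "inj_on v {0..k}"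
begin

definition succ :: "nat \<Rightarrow> nat" where
  "succ i = (if i = k then 1 else Suc i)"

definition radius :: "nat \<Rightarrow> nat set" where
  "radius i = {v 0, v i}"

definition chord :: "nat \<Rightarrow> nat set" where
  "chord i = {v i, v (succ i)}"

abbreviation "V \<equiv> v ` {0..k}"
abbreviation "R \<equiv> radius ` {1..k}"
abbreviation "C \<equiv> chord ` {1..k}"
abbreviation "E \<equiv> R \<union> C"

lemma v_eq_iff [simp]: "i \<le> k \<Longrightarrow> j \<le> k \<Longrightarrow> v i = v j \<longleftrightarrow> i = j"
  using inj_v by (auto simp: inj_on_def)

lemma v_in_image_iff [simp]: "I \<subseteq> {0..k} \<Longrightarrow> i \<le> k \<Longrightarrow> v i \<in> v ` I \<longleftrightarrow> i \<in> I"
  using inj_on_image_mem_iff[OF inj_v] by auto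

lemma succ_bounds: "1 \<le> i \<Longrightarrow> i \<le> k \<Longrightarrow> 1 \<le> succ i \<and> succ i \<le> k \<and> succ i \<noteq> i"
  using three_le_k by (auto simp: succ_def)

lemma succ_last [simp]: "succ k = 1"
  by (simp add: succ_def)

lemma succ_less [simp]: "i < k \<Longrightarrow> succ i = Suc i"
  by (simp add: succ_def)

lemma chord_last: "chord k = {v k, v 1}"
  by (simp add: chord_def)

lemma chord_first: "chord 1 = {v 1, v 2}"
  using three_le_k by (simp add: chord_def succ_def numeral_2_eq_2)

lemma chord_less: "i < k \<Longrightarrow> chord i = {v i, v (Suc i)}"
  by (simp add: chord_def)

lemma radius_eq_iff [simp]:
  "1 \<le> i \<Longrightarrow> i \<le> k \<Longrightarrow> 1 \<le> j \<Longrightarrow> j \<le> k \<Longrightarrow> radius i = radius j \<longleftrightarrow> i = j"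
  by (auto simp: radius_def doubleton_eq_iff)

lemma chord_eq_iff [simp]:
  assumes "1 \<le> i" "i \<le> k" "1 \<le> j" "j \<le> k"
  shows "chord i = chord j \<longleftrightarrow> i = j"
  using assms succ_bounds[of i] succ_bounds[of j] three_le_k
  by (auto simp: chord_def doubleton_eq_iff succ_def split: if_splits)

lemma radius_neq_chord [simp]: "1 \<le> j \<Longrightarrow> j \<le> k \<Longrightarrow> radius i \<noteq> chord j"
  using succ_bounds[of j] by (auto simp: radius_def chord_def doubleton_eq_iff)

lemma chord_neq_radius [simp]: "1 \<le> j \<Longrightarrow> j \<le> k \<Longrightarrow> chord j \<noteq> radius i"
  using radius_neq_chord by metis

lemma card_chord: "1 \<le> i \<Longrightarrow> i \<le> k \<Longrightarrow> card (chord i) = 2"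
  using succ_bounds[of i] by (simp add: chord_def)

lemma wheel_edge: "e \<in> E \<Longrightarrow> e \<subseteq> V \<and> card e = 2"
  using succ_bounds card_chord by (auto simp: radius_def chord_def)

lemma card_wheel_edges: "card E + 2 \<le> 2 * card V"
proof -
  have "card E \<le> card R + card C"
    by (rule card_Un_le)
  also have "\<dots> \<le> k + k"
    using card_image_le[of "{1..k}" radius] card_image_le[of "{1..k}" chord] by simp
  finally show ?thesis
    using card_image[OF inj_v] by simp
qed

lemma wheel_vertices_eq: "wheel_vertices v k = V"
  by (simp add: wheel_vertices_def)

lemma radii_eq: "radii v k = R"
  by (auto simp: radii_def radius_def)

lemma chords_eq: "chords v k = C"
  by (force simp: chords_def chord_def succ_def)

lemma wheel_edges_eq: "wheel_edges v k = E"
  by (simp add: wheel_edges_def radii_eq chords_eq)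

lemma coupled_treeI_wheel:
  "T \<subseteq> E \<Longrightarrow> connects V T \<Longrightarrow> connects V (E - T) \<Longrightarrow> coupled_tree V E T"
  using wheel_edge card_wheel_edges by (intro coupled_treeI_card) auto

lemma card_coupled_tree: "coupled_tree V E T \<Longrightarrow> card T = k"
  using coupled_tree_card[of V E T] card_wheel_edges card_image[OF inj_v] by simp

lemma leading_tree_eq_if_dominates:
  assumes "coupled_tree V E T0"
    and "\<And>T x. coupled_tree V E T \<Longrightarrow> x \<in> T - T0 \<Longrightarrow> \<exists>y\<in>T0 - T. edge_gt y x"
  shows "leading_tree v k = T0"
proof (rule leading_tree_eqI)
  show "coupled_tree (wheel_vertices v k) (wheel_edges v k) T0"
    using assms(1) by (simp add: wheel_vertices_eq wheel_edges_eq)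
next
  fix T assume "coupled_tree (wheel_vertices v k) (wheel_edges v k) T" "T \<noteq> T0"
  then have T: "coupled_tree V E T" "T \<noteq> T0"
    by (simp_all add: wheel_vertices_eq wheel_edges_eq)
  have "T \<subseteq> E" "T0 \<subseteq> E"
    using assms(1) T(1) unfolding coupled_tree_def by auto
  then have "finite T0" "finite T" "\<forall>e\<in>T0 \<union> T. card e = 2"
    using finite_subset[of _ E] wheel_edge by auto
  moreover have "card T \<le> card T0"
    using card_coupled_tree assms(1) T(1) by simp
  ultimately show "set_gt T0 T"
    using T assms(2) by (intro set_gtI) auto
qed

lemma rim_path:
  assumes "1 \<le> a" "a \<le> b" "b \<le> k" "\<And>j. a \<le> j \<Longrightarrow> j < b \<Longrightarrow> chord j \<in> F"
  shows "(v a, v b) \<in> (edge_conn F)\<^sup>*"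
  using assms by (intro rtrancl_edge_conn_path) (auto simp: chord_less)

(* The two alternatives describe an edge of E - T leaving the vertex set v ` I. *)
lemma coupled_tree_crossing_edge:
  assumes "coupled_tree V E T" "I \<subseteq> {0..k}" "a \<in> I" "b \<le> k" "b \<notin> I"
  obtains j where "1 \<le> j" "j \<le> k" "radius j \<notin> T" "0 \<in> I \<longleftrightarrow> j \<notin> I"
    | j where "1 \<le> j" "j \<le> k" "chord j \<notin> T" "j \<in> I \<longleftrightarrow> succ j \<notin> I"
proof -
  have "connects V (E - T)"
    using assms(1) unfolding coupled_tree_def spanning_tree_def by blast
  moreover have "v a \<in> V" "v b \<in> V" "v a \<in> v ` I" "v b \<notin> v ` I"
    using assms(2-5) by auto
  ultimately obtain x y where xy: "{x, y} \<in> E - T" "x \<in> v ` I" "y \<notin> v ` I"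
    by (rule connects_crossing_edge)
  then consider j where "1 \<le> j" "j \<le> k" "{x, y} = radius j" "radius j \<notin> T"
    | j where "1 \<le> j" "j \<le> k" "{x, y} = chord j" "chord j \<notin> T"
    by auto
  then show thesis
  proof cases
    case (1 j)
    then have "v 0 \<in> v ` I \<longleftrightarrow> v j \<notin> v ` I"
      using xy unfolding radius_def doubleton_eq_iff by blast
    then have "0 \<in> I \<longleftrightarrow> j \<notin> I"
      using assms(2) 1 by simp
    then show thesis
      using that(1) 1 by blast
  next
    case (2 j)
    then have "v j \<in> v ` I \<longleftrightarrow> v (succ j) \<notin> v ` I"
      using xy unfolding chord_def doubleton_eq_iff by blast
    then have "j \<in> I \<longleftrightarrow> succ j \<notin> I"
      using assms(2) 2 succ_bounds[of j] by simp
    then show thesis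
      using that(2) 2 by blast
  qed
qed

lemma coupled_tree_not_all_radii: "coupled_tree V E T \<Longrightarrow> \<not> R \<subseteq> T"
  by (rule coupled_tree_crossing_edge[of T "{0}" 0 1])
    (use three_le_k in \<open>auto simp: succ_def image_subset_iff split: if_splits\<close>)

lemma coupled_tree_not_all_chords:
  assumes "coupled_tree V E T"
  shows "\<not> C \<subseteq> T"
proof
  assume "C \<subseteq> T"
  let ?F = "T - {chord 1}"
  have chords: "chord j \<in> ?F" if "2 \<le> j" "j \<le> k" for j
    using \<open>C \<subseteq> T\<close> that by auto
  then have "(v 2, v k) \<in> (edge_conn ?F)\<^sup>*"
    using three_le_k by (intro rim_path) auto
  moreover have "(v k, v 1) \<in> (edge_conn ?F)\<^sup>*"
    using chords[of k] three_le_k unfolding chord_last by (intro edge_conn_rtrancl_edge) auto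
  ultimately have "(v 1, v 2) \<in> (edge_conn ?F)\<^sup>*"
    by (meson edge_conn_rtrancl_sym rtrancl_trans)
  moreover have "chord 1 \<in> T"
    using \<open>C \<subseteq> T\<close> three_le_k by auto
  ultimately show False
    using coupled_tree_edge_is_bridge[OF assms] unfolding chord_first by blast
qed

lemma coupled_tree_no_triangle:
  assumes "coupled_tree V E T" "1 \<le> i" "i \<le> k"
  shows "\<not> {chord i, radius i, radius (succ i)} \<subseteq> T"
proof
  assume "{chord i, radius i, radius (succ i)} \<subseteq> T"
  let ?F = "T - {chord i}"
  have "radius i \<in> ?F" "radius (succ i) \<in> ?F"
    using \<open>_ \<subseteq> T\<close> assms(2,3) succ_bounds[of i] by auto
  then have "(v i, v 0) \<in> (edge_conn ?F)\<^sup>*" "(v 0, v (succ i)) \<in> (edge_conn ?F)\<^sup>*"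
    unfolding radius_def by (auto intro: edge_conn_rtrancl_edge simp: insert_commute)
  then have "(v i, v (succ i)) \<in> (edge_conn ?F)\<^sup>*"
    by (rule rtrancl_trans)
  then show False
    using coupled_tree_edge_is_bridge[OF assms(1)] \<open>_ \<subseteq> T\<close> by (simp add: chord_def)
qed

lemma coupled_tree_no_quadrilateral:
  assumes "coupled_tree V E T"
  shows "\<not> {chord 1, chord k, radius k, radius 2} \<subseteq> T"
proof
  assume "{chord 1, chord k, radius k, radius 2} \<subseteq> T"
  let ?F = "T - {chord 1}"
  have "chord k \<in> ?F" "radius k \<in> ?F" "radius 2 \<in> ?F"
    using \<open>_ \<subseteq> T\<close> three_le_k by auto
  then have "(v 1, v k) \<in> (edge_conn ?F)\<^sup>*" "(v k, v 0) \<in> (edge_conn ?F)\<^sup>*"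
    "(v 0, v 2) \<in> (edge_conn ?F)\<^sup>*"
    unfolding radius_def chord_last by (auto intro: edge_conn_rtrancl_edge simp: insert_commute)
  then have "(v 1, v 2) \<in> (edge_conn ?F)\<^sup>*"
    by (meson rtrancl_trans)
  then show False
    using coupled_tree_edge_is_bridge[OF assms(1)] \<open>_ \<subseteq> T\<close> unfolding chord_first by blast
qed

lemma coupled_tree_cut_first_two:
  "coupled_tree V E T \<Longrightarrow> \<not> {radius 1, radius 2, chord 2, chord k} \<subseteq> T"
  by (rule coupled_tree_crossing_edge[of T "{1, 2}" 1 0])
    (use three_le_k in \<open>auto simp: succ_def split: if_splits\<close>)

lemma coupled_tree_cut_vertex:
  "coupled_tree V E T \<Longrightarrow> 2 \<le> i \<Longrightarrow> i \<le> k \<Longrightarrow> \<not> {radius i, chord (i - 1), chord i} \<subseteq> T"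
  by (rule coupled_tree_crossing_edge[of T "{i}" i 0]) (auto simp: succ_def split: if_splits)

end

section \<open>Leading trees of wheels with extremal centre\<close>

locale min_center_wheel = wheel +
  assumes center_min: "v 0 = Min V"
    and first_max: "v 1 = Max (v ` {1..k})"
    and last_less_second: "v k < v 2"
begin

lemma center_less: "1 \<le> i \<Longrightarrow> i \<le> k \<Longrightarrow> v 0 < v i"
  using center_min v_eq_iff[of 0 i] by (simp add: order_less_le)

lemma less_first: "2 \<le> i \<Longrightarrow> i \<le> k \<Longrightarrow> v i < v 1"
  using first_max v_eq_iff[of i 1] by (simp add: order_less_le)

lemma radius_gt_radius_first: "2 \<le> i \<Longrightarrow> i \<le> k \<Longrightarrow> edge_gt (radius i) (radius 1)"
  using center_less[of i] center_less[of 1] less_first[of i]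
  by (simp add: radius_def edge_gt_def min_def max_def)

lemma radius_gt_chord:
  "1 \<le> i \<Longrightarrow> i \<le> k \<Longrightarrow> 1 \<le> j \<Longrightarrow> j \<le> k \<Longrightarrow> edge_gt (radius i) (chord j)"
  using center_less[of i] center_less[of j] center_less[of "succ j"] succ_bounds[of j]
  by (simp add: radius_def chord_def edge_gt_def min_def)

lemma chord_last_gt_chord_first: "edge_gt (chord k) (chord 1)"
  using less_first[of k] less_first[of 2] last_less_second three_le_k
  unfolding chord_last chord_first edge_gt_def by (simp add: min_def)

definition candidate :: "nat set set" where
  "candidate = insert (chord k) (R - {radius 1})"

lemma candidate_connects: "connects V candidate"
proof (rule connectsI_root)
  fix x assume "x \<in> V"
  then obtain i where i: "i \<le> k" "x = v i"
    by auto
  have spoke: "(v 0, v j) \<in> (edge_conn candidate)\<^sup>*" if "2 \<le> j" "j \<le> k" for j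
  proof -
    have "radius j \<in> candidate"
      using that by (auto simp: candidate_def)
    then show ?thesis
      unfolding radius_def by (rule edge_conn_rtrancl_edge)
  qed
  consider "i = 0" | "i = 1" | "2 \<le> i"
    by linarith
  then show "(v 0, x) \<in> (edge_conn candidate)\<^sup>*"
  proof cases
    case 2
    have "(v 0, v k) \<in> (edge_conn candidate)\<^sup>*"
      using spoke three_le_k by simp
    moreover have "(v k, v 1) \<in> (edge_conn candidate)\<^sup>*"
      using edge_conn_rtrancl_edge[of "v k" "v 1" candidate] by (simp add: candidate_def chord_last)
    ultimately show ?thesis
      using i 2 by (meson rtrancl_trans)
  qed (use i spoke in auto)
qed

lemma candidate_complement_connects: "connects V (E - candidate)"
proof (rule connectsI_root)
  fix x assume "x \<in> V"
  then obtain i where i: "i \<le> k" "x = v i"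
    by auto
  have "radius 1 \<in> E - candidate"
    using three_le_k by (auto simp: candidate_def)
  then have "(v 0, v 1) \<in> (edge_conn (E - candidate))\<^sup>*"
    unfolding radius_def by (rule edge_conn_rtrancl_edge)
  moreover have "(v 1, v i) \<in> (edge_conn (E - candidate))\<^sup>*" if "1 \<le> i"
    using that i by (intro rim_path) (auto simp: candidate_def)
  ultimately show "(v 0, x) \<in> (edge_conn (E - candidate))\<^sup>*"
    using i by (cases "i = 0") (auto intro: rtrancl_trans)
qed

lemma coupled_tree_candidate: "coupled_tree V E candidate"
  using candidate_connects candidate_complement_connects three_le_k
  by (intro coupled_treeI_wheel) (auto simp: candidate_def)

lemma not_in_candidate_cases:
  assumes "x \<in> E - candidate"
  obtains "x = radius 1" | j where "1 \<le> j" "j < k" "x = chord j"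
proof (cases "x \<in> R")
  case False
  then obtain j where "1 \<le> j" "j \<le> k" "x = chord j"
    using assms by auto
  moreover have "j \<noteq> k"
    using assms calculation by (auto simp: candidate_def)
  ultimately show thesis
    using that(2) by simp
qed (use assms that in \<open>auto simp: candidate_def\<close>)

lemma candidate_dominates:
  assumes "coupled_tree V E T" "x \<in> T - candidate"
  shows "\<exists>y\<in>candidate - T. edge_gt y x"
proof -
  have "x \<in> E - candidate"
    using assms unfolding coupled_tree_def by blast
  then show ?thesis
  proof (cases rule: not_in_candidate_cases)
    case 1
    obtain i where "i \<in> {1..k}" "radius i \<notin> T"
      using coupled_tree_not_all_radii[OF assms(1)] by blast
    moreover have "i \<noteq> 1"
      using calculation 1 assms(2) by auto
    ultimately show ?thesis
      using radius_gt_radius_first[of i] 1 by (intro bexI[of _ "radius i"]) (auto simp: candidate_def)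
  next
    case (2 j)
    show ?thesis
    proof (cases "j = 1")
      case True
      then have "\<not> {chord k, radius k, radius 2} \<subseteq> T"
        using coupled_tree_no_quadrilateral[OF assms(1)] assms(2) 2 by auto
      moreover have "{chord k, radius k, radius 2} \<subseteq> candidate"
        using three_le_k by (auto simp: candidate_def)
      moreover have "\<forall>y\<in>{chord k, radius k, radius 2}. edge_gt y x"
        using 2 True three_le_k chord_last_gt_chord_first radius_gt_chord[of k 1]
          radius_gt_chord[of 2 1] by auto
      ultimately show ?thesis
        by blast
    next
      case False
      then have "\<not> {radius j, radius (Suc j)} \<subseteq> T"
        using coupled_tree_no_triangle[OF assms(1), of j] assms(2) 2 by auto
      moreover have "{radius j, radius (Suc j)} \<subseteq> candidate"
        using 2 False by (auto simp: candidate_def)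
      moreover have "\<forall>y\<in>{radius j, radius (Suc j)}. edge_gt y x"
        using 2 radius_gt_chord[of j j] radius_gt_chord[of "Suc j" j] by auto
      ultimately show ?thesis
        by blast
    qed
  qed
qed

theorem leading_tree_min_center: "leading_tree v k = (radii v k - {{v 0, v 1}}) \<union> {{v k, v 1}}"
proof -
  have "leading_tree v k = candidate"
    using coupled_tree_candidate candidate_dominates by (rule leading_tree_eq_if_dominates)
  then show ?thesis
    unfolding candidate_def radii_eq chord_last radius_def[of 1] by simp
qed

end

locale max_center_wheel = wheel +
  assumes center_max: "v 0 = Max V"
    and chord_first_least: "\<forall>c\<in>C. c \<noteq> {v 1, v 2} \<longrightarrow> edge_gt c {v 1, v 2}"
    and second_less_first: "v 2 < v 1"
begin

lemma less_center: "1 \<le> i \<Longrightarrow> i \<le> k \<Longrightarrow> v i < v 0"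
  using center_max v_eq_iff[of i 0] by (simp add: order_less_le)

lemma radius_second_gt_radius_first: "edge_gt (radius 2) (radius 1)"
  using less_center[of 1] less_center[of 2] second_less_first three_le_k
  by (simp add: radius_def edge_gt_def min_def)

lemma chord_second_gt_radius_first: "edge_gt (chord 2) (radius 1)"
  using less_center[of 1] less_center[of 2] second_less_first three_le_k
  by (simp add: chord_def radius_def edge_gt_def min_def)

lemma chord_gt_incident_radius:
  assumes "1 \<le> i" "i \<le> k" "j = i \<or> j = succ i"
  shows "edge_gt (chord i) (radius j)"
  using assms less_center[of i] less_center[of "succ i"] succ_bounds[of i]
    edge_gt_smaller_endpoint[of "v (succ i)" "v 0" "v i"] edge_gt_smaller_endpoint[of "v i" "v 0" "v (succ i)"]
  by (auto simp: chord_def radius_def insert_commute)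

definition candidate :: "nat set set" where
  "candidate = insert (radius 2) (C - {chord 1})"

lemma candidate_connects: "connects V candidate"
proof (rule connectsI_root)
  fix x assume "x \<in> V"
  then obtain i where i: "i \<le> k" "x = v i"
    by auto
  have rim: "(v 2, v j) \<in> (edge_conn candidate)\<^sup>*" if "2 \<le> j" "j \<le> k" for j
    using that by (intro rim_path) (auto simp: candidate_def)
  consider "i = 0" | "i = 1" | "2 \<le> i"
    by linarith
  then show "(v 2, x) \<in> (edge_conn candidate)\<^sup>*"
  proof cases
    case 1
    have "radius 2 \<in> candidate"
      by (simp add: candidate_def)
    then show ?thesis
      unfolding 1 i radius_def by (intro edge_conn_rtrancl_edge) (simp add: insert_commute)
  next
    case 2
    have "(v 2, v k) \<in> (edge_conn candidate)\<^sup>*"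
      using rim three_le_k by simp
    moreover have "chord k \<in> candidate"
      using three_le_k by (auto simp: candidate_def)
    then have "(v k, v 1) \<in> (edge_conn candidate)\<^sup>*"
      unfolding chord_last by (rule edge_conn_rtrancl_edge)
    ultimately show ?thesis
      using i 2 by (meson rtrancl_trans)
  qed (use i rim in auto)
qed

lemma candidate_complement_connects: "connects V (E - candidate)"
proof (rule connectsI_root)
  fix x assume "x \<in> V"
  then obtain i where i: "i \<le> k" "x = v i"
    by auto
  have spoke: "(v 0, v j) \<in> (edge_conn (E - candidate))\<^sup>*" if "1 \<le> j" "j \<le> k" "j \<noteq> 2" for j
  proof -
    have "radius j \<in> E - candidate"
      using that three_le_k by (auto simp: candidate_def)
    then show ?thesis
      unfolding radius_def by (rule edge_conn_rtrancl_edge)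
  qed
  have "chord 1 \<in> E - candidate"
    using three_le_k by (auto simp: candidate_def)
  then have "(v 1, v 2) \<in> (edge_conn (E - candidate))\<^sup>*"
    unfolding chord_first by (rule edge_conn_rtrancl_edge)
  moreover have "(v 0, v 1) \<in> (edge_conn (E - candidate))\<^sup>*"
    using spoke three_le_k by simp
  ultimately have "(v 0, v 2) \<in> (edge_conn (E - candidate))\<^sup>*"
    by (meson rtrancl_trans)
  then show "(v 0, x) \<in> (edge_conn (E - candidate))\<^sup>*"
    using i spoke[of i] by (cases "i = 0 \<or> i = 2") auto
qed

lemma coupled_tree_candidate: "coupled_tree V E candidate"
  using candidate_connects candidate_complement_connects three_le_k
  by (intro coupled_treeI_wheel) (auto simp: candidate_def)

lemma not_in_candidate_cases:
  assumes "x \<in> E - candidate"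
  obtains "x = chord 1" | "x = radius 1" | i where "3 \<le> i" "i \<le> k" "x = radius i"
proof (cases "x \<in> C")
  case False
  then obtain i where "1 \<le> i" "i \<le> k" "x = radius i"
    using assms by auto
  moreover have "i \<noteq> 2"
    using assms calculation by (auto simp: candidate_def)
  ultimately show thesis
    using that(2) that(3)[of i] by (cases "i = 1") auto
next
  case True
  then show thesis
    using that(1) assms unfolding candidate_def by blast
qed

lemma candidate_dominates:
  assumes "coupled_tree V E T" "x \<in> T - candidate"
  shows "\<exists>y\<in>candidate - T. edge_gt y x"
proof -
  have "x \<in> E - candidate"
    using assms unfolding coupled_tree_def by blast
  then show ?thesis
  proof (cases rule: not_in_candidate_cases)
    case 1
    obtain j where "j \<in> {1..k}" "chord j \<notin> T"
      using coupled_tree_not_all_chords[OF assms(1)] by blast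
    moreover have "j \<noteq> 1"
      using calculation 1 assms(2) by auto
    ultimately have "chord j \<in> candidate - T" "edge_gt (chord j) x"
      using chord_first_least 1 three_le_k unfolding chord_first[symmetric] by (auto simp: candidate_def)
    then show ?thesis
      by blast
  next
    case 2
    then have "\<not> {radius 2, chord 2, chord k} \<subseteq> T"
      using coupled_tree_cut_first_two[OF assms(1)] assms(2) by auto
    moreover have "{radius 2, chord 2, chord k} \<subseteq> candidate"
      using three_le_k by (auto simp: candidate_def)
    moreover have "\<forall>y\<in>{radius 2, chord 2, chord k}. edge_gt y x"
      using 2 three_le_k radius_second_gt_radius_first chord_second_gt_radius_first
        chord_gt_incident_radius[of k 1] by auto
    ultimately show ?thesis
      by blast
  next
    case (3 i)
    then have "\<not> {chord (i - 1), chord i} \<subseteq> T"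
      using coupled_tree_cut_vertex[OF assms(1), of i] assms(2) by auto
    moreover have "{chord (i - 1), chord i} \<subseteq> candidate"
      using 3 by (auto simp: candidate_def intro!: imageI)
    moreover have "\<forall>y\<in>{chord (i - 1), chord i}. edge_gt y x"
      using 3 chord_gt_incident_radius[of "i - 1" i] chord_gt_incident_radius[of i i] by auto
    ultimately show ?thesis
      by blast
  qed
qed

theorem leading_tree_max_center: "leading_tree v k = (chords v k - {{v 1, v 2}}) \<union> {{v 0, v 2}}"
proof -
  have "leading_tree v k = candidate"
    using coupled_tree_candidate candidate_dominates by (rule leading_tree_eq_if_dominates)
  then show ?thesis
    unfolding candidate_def chords_eq chord_first[symmetric] radius_def[of 2, symmetric] by simp
qed

end

theorem proposition4p2:
  fixes n k :: nat and v :: "nat \<Rightarrow> nat"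
  assumes "k \<ge> 3"
    and "inj_on v {0..k}"
    and "v ` {0..k} \<subseteq> {1..n}"
  shows "(v 0 = Min (wheel_vertices v k) \<and> v 1 = Max (v ` {1..k}) \<and> v 2 > v k \<longrightarrow>
           leading_tree v k = (radii v k - {{v 0, v 1}}) \<union> {{v k, v 1}})
       \<and> (v 0 = Max (wheel_vertices v k) \<and>
           (\<forall>c\<in>chords v k. c \<noteq> {v 1, v 2} \<longrightarrow> edge_gt c {v 1, v 2}) \<and> v 1 > v 2 \<longrightarrow>
           leading_tree v k = (chords v k - {{v 1, v 2}}) \<union> {{v 0, v 2}})"
proof -
  interpret wheel k v
    using assms(1,2) by unfold_locales
  show ?thesis
  proof (intro conjI impI)
    assume "v 0 = Min (wheel_vertices v k) \<and> v 1 = Max (v ` {1..k}) \<and> v 2 > v k"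
    then interpret min_center_wheel k v
      by unfold_locales (auto simp: wheel_vertices_eq)
    show "leading_tree v k = (radii v k - {{v 0, v 1}}) \<union> {{v k, v 1}}"
      by (rule leading_tree_min_center)
  next
    assume "v 0 = Max (wheel_vertices v k) \<and>
      (\<forall>c\<in>chords v k. c \<noteq> {v 1, v 2} \<longrightarrow> edge_gt c {v 1, v 2}) \<and> v 1 > v 2"
    then interpret max_center_wheel k v
      by unfold_locales (auto simp: wheel_vertices_eq chords_eq)
    show "leading_tree v k = (chords v k - {{v 1, v 2}}) \<union> {{v 0, v 2}}"
      by (rule leading_tree_max_center)
  qed
qed

end
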